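(* Let $F:\mathbb{R}^d\to\mathbb{R}^d$ be $L$-Lipschitz, $G:\mathbb{R}^d\rightrightarrows\mathbb{R}^d$ maximally monotone, the solution set of $0\in F(x)+G(x)$ nonempty, and suppose $x^\star$ is a solution satisfying $\langle u,x-x^\star\rangle\ge-\rho\|u\|^2$ for all $(x,u)$ in the graph of $F+G$, with $\rho>0$. Let $\eta>\rho$, $\alpha=1-\frac\rho\eta$, $x_0\in\mathbb{R}^d$, and suppose $(x_k)$ satisfies $x_{k+1}=(1-\alpha)x_k+\alpha\widetilde J_k$ for $k\ge0$, where the points $\widetilde J_k$ satisfy $\|J_{\eta(F+G)}(x_k)-\widetilde J_k\|\le\varepsilon_k$ for some $\varepsilon_k>0$. Then for $K\ge1$, $$\sum_{k=0}^{K-1}\|(\mathrm{Id}-J_{\eta(F+G)})(x_k)\|^2-\frac{2\eta^2}{(\eta-\rho)^2}\|x_0-x^\star\|^2\le6\sum_{k=0}^{K-1}\varepsilon_k^2+\frac{4\eta}{\eta-\rho}\sum_{k=0}^{K-1}\|x_k-x^\star\|\varepsilon_k,$$ and $\|x_k-x^\star\|\le\|x_{k-1}-x^\star\|+\alpha\varepsilon_{k-1}$ for $k\ge1$.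
   Context: For an operator $A$, $J_A=(\mathrm{Id}+A)^{-1}$ is its resolvent. Here $\eta$ is additionally such that the resolvent $J_{\eta(F+G)}$ is evaluated at the iterates. *)

theory Defs
  imports "HOL-Analysis.Analysis"
begin

definition monotone_op :: "('a::real_inner \<Rightarrow> 'a set) \<Rightarrow> bool" where
  "monotone_op A \<longleftrightarrow>
     (\<forall>x y u v. u \<in> A x \<longrightarrow> v \<in> A y \<longrightarrow> inner (u - v) (x - y) \<ge> 0)"

definition maximally_monotone :: "('a::real_inner \<Rightarrow> 'a set) \<Rightarrow> bool" where
  "maximally_monotone A \<longleftrightarrow> monotone_op A \<and>
     (\<forall>x u. (\<forall>y v. v \<in> A y \<longrightarrow> inner (u - v) (x - y) \<ge> 0) \<longrightarrow> u \<in> A x)"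

definition op_sum :: "('a::real_vector \<Rightarrow> 'a) \<Rightarrow> ('a \<Rightarrow> 'a set) \<Rightarrow> 'a \<Rightarrow> 'a set" where
  "op_sum F G x = (\<lambda>u. F x + u) ` G x"

definition op_scale :: "real \<Rightarrow> ('a::real_vector \<Rightarrow> 'a set) \<Rightarrow> 'a \<Rightarrow> 'a set" where
  "op_scale c A x = (\<lambda>u. c *\<^sub>R u) ` A x"

text \<open>Resolvent J_A = (Id + A)^{-1}, as a set-valued map:
  p \<in> J_A x iff x \<in> p + A p.\<close>
definition resolvent :: "('a::real_vector \<Rightarrow> 'a set) \<Rightarrow> 'a \<Rightarrow> 'a set" where
  "resolvent A x = {p. x - p \<in> A p}"

end

theory Submission
  imports Defs
begin

text \<open>By the weak Minty condition the resolvent residual \<open>r\<^sub>k = x\<^sub>k - J\<^sub>k\<close> satisfies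
  \<open>\<langle>r\<^sub>k, x\<^sub>k - x\<^sup>\<star>\<rangle> \<ge> \<alpha> \<parallel>r\<^sub>k\<parallel>\<^sup>2\<close>, so the exact relaxed step \<open>x\<^sub>k - \<alpha> r\<^sub>k\<close> moves towards
  \<open>x\<^sup>\<star>\<close>: its squared distance drops by at least \<open>\<alpha>\<^sup>2 \<parallel>r\<^sub>k\<parallel>\<^sup>2\<close>. The actual iterate differs
  from it by \<alpha> times the resolvent error, whose effect on the squared distance is controlled by
  Cauchy-Schwarz; telescoping over \<open>k < K\<close> and dividing by \<open>\<alpha>\<^sup>2\<close> gives the bound, with room to
  spare in the constants.\<close>

lemma resolvent_scaleE:
  assumes "p \<in> resolvent (op_scale \<eta> A) x"
  obtains u where "u \<in> A p" and "x - p = \<eta> *\<^sub>R u"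
  using assms by (auto simp: resolvent_def op_scale_def)

lemma weak_minty_resolvent_residual:
  fixes A :: "'a::real_inner \<Rightarrow> 'a set"
  assumes weak_minty: "\<And>y u. u \<in> A y \<Longrightarrow> inner u (y - xstar) \<ge> - \<rho> * (norm u)\<^sup>2"
    and \<eta>_pos: "\<eta> > 0"
    and p: "p \<in> resolvent (op_scale \<eta> A) x"
  shows "inner (x - p) (x - xstar) \<ge> (1 - \<rho> / \<eta>) * (norm (x - p))\<^sup>2"
proof -
  obtain u where u: "u \<in> A p" and r: "x - p = \<eta> *\<^sub>R u"
    using p by (rule resolvent_scaleE)
  have "\<eta> * inner (x - p) (p - xstar) = \<eta> * \<eta> * inner u (p - xstar)"
    by (simp add: r)
  also have "\<dots> \<ge> \<eta> * \<eta> * (- \<rho> * (norm u)\<^sup>2)"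
    using weak_minty[OF u] \<eta>_pos by (intro mult_left_mono) auto
  also have "\<eta> * \<eta> * (- \<rho> * (norm u)\<^sup>2) = - \<rho> * (norm (x - p))\<^sup>2"
    using \<eta>_pos by (simp add: r power2_eq_square)
  finally have "inner (x - p) (p - xstar) \<ge> - (\<rho> / \<eta>) * (norm (x - p))\<^sup>2"
    using \<eta>_pos by (simp add: field_simps)
  moreover have "inner (x - p) (x - xstar) = (norm (x - p))\<^sup>2 + inner (x - p) (p - xstar)"
    by (simp add: power2_norm_eq_inner flip: inner_add_right)
  ultimately show ?thesis
    by (simp add: algebra_simps)
qed

lemma relaxed_step_norm_sq_le:
  fixes a r :: "'a::real_inner"
  assumes "inner r a \<ge> \<alpha> * (norm r)\<^sup>2" and "\<alpha> \<ge> 0"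
  shows "(norm (a - \<alpha> *\<^sub>R r))\<^sup>2 \<le> (norm a)\<^sup>2 - \<alpha>\<^sup>2 * (norm r)\<^sup>2"
proof -
  have "(norm (a - \<alpha> *\<^sub>R r))\<^sup>2 = (norm a)\<^sup>2 - 2 * \<alpha> * inner r a + \<alpha>\<^sup>2 * (norm r)\<^sup>2"
    unfolding power2_norm_eq_inner
    by (simp add: inner_diff_left inner_diff_right inner_commute power2_eq_square algebra_simps)
  moreover have "2 * \<alpha> * inner r a \<ge> 2 * \<alpha> * (\<alpha> * (norm r)\<^sup>2)"
    using assms by (intro mult_left_mono) auto
  ultimately show ?thesis
    by (simp add: power2_eq_square algebra_simps)
qed

lemma norm_sq_add_scaled_le:
  fixes b e :: "'a::real_inner"
  assumes "norm b \<le> B" and "norm e \<le> \<epsilon>" and "\<alpha> \<ge> 0"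
  shows "(norm (b + \<alpha> *\<^sub>R e))\<^sup>2 \<le> (norm b)\<^sup>2 + 2 * \<alpha> * (B * \<epsilon>) + \<alpha>\<^sup>2 * \<epsilon>\<^sup>2"
proof -
  have "(norm (b + \<alpha> *\<^sub>R e))\<^sup>2 = (norm b)\<^sup>2 + 2 * \<alpha> * inner b e + \<alpha>\<^sup>2 * (norm e)\<^sup>2"
    unfolding power2_norm_eq_inner
    by (simp add: inner_add_left inner_add_right inner_commute power2_eq_square algebra_simps)
  moreover have "inner b e \<le> B * \<epsilon>"
    using norm_cauchy_schwarz[of b e] mult_mono[OF assms(1,2)] order_trans[OF norm_ge_zero assms(1)]
    by simp
  then have "2 * \<alpha> * inner b e \<le> 2 * \<alpha> * (B * \<epsilon>)"
    using assms(3) by (intro mult_left_mono) auto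
  moreover have "\<alpha>\<^sup>2 * (norm e)\<^sup>2 \<le> \<alpha>\<^sup>2 * \<epsilon>\<^sup>2"
    using assms(2) by (intro mult_left_mono power_mono) auto
  ultimately show ?thesis
    by linarith
qed

lemma inexact_relaxed_step:
  fixes x J Jt xstar :: "'a::real_inner"
  assumes residual: "inner (x - J) (x - xstar) \<ge> \<alpha> * (norm (x - J))\<^sup>2"
    and \<alpha>_nonneg: "\<alpha> \<ge> 0"
    and inexact: "norm (J - Jt) \<le> \<epsilon>"
    and next_def: "x' = (1 - \<alpha>) *\<^sub>R x + \<alpha> *\<^sub>R Jt"
  shows "\<alpha>\<^sup>2 * (norm (x - J))\<^sup>2
           \<le> (norm (x - xstar))\<^sup>2 - (norm (x' - xstar))\<^sup>2
             + (2 * \<alpha> * (norm (x - xstar) * \<epsilon>) + \<alpha>\<^sup>2 * \<epsilon>\<^sup>2)"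
    and "norm (x' - xstar) \<le> norm (x - xstar) + \<alpha> * \<epsilon>"
proof -
  define b where "b = (x - xstar) - \<alpha> *\<^sub>R (x - J)"
  define e where "e = Jt - J"
  have b_sq: "(norm b)\<^sup>2 \<le> (norm (x - xstar))\<^sup>2 - \<alpha>\<^sup>2 * (norm (x - J))\<^sup>2"
    unfolding b_def using residual \<alpha>_nonneg by (rule relaxed_step_norm_sq_le)
  moreover have "0 \<le> \<alpha>\<^sup>2 * (norm (x - J))\<^sup>2"
    by simp
  ultimately have "(norm b)\<^sup>2 \<le> (norm (x - xstar))\<^sup>2"
    by linarith
  then have b_le: "norm b \<le> norm (x - xstar)"
    by (rule power2_le_imp_le[OF _ norm_ge_zero])
  have e_le: "norm e \<le> \<epsilon>"
    using inexact by (simp add: e_def norm_minus_commute)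
  have x'_eq: "x' - xstar = b + \<alpha> *\<^sub>R e"
    by (simp add: next_def b_def e_def algebra_simps)
  show "\<alpha>\<^sup>2 * (norm (x - J))\<^sup>2
          \<le> (norm (x - xstar))\<^sup>2 - (norm (x' - xstar))\<^sup>2
            + (2 * \<alpha> * (norm (x - xstar) * \<epsilon>) + \<alpha>\<^sup>2 * \<epsilon>\<^sup>2)"
    using norm_sq_add_scaled_le[OF b_le e_le \<alpha>_nonneg] b_sq by (simp add: x'_eq)
  have "norm (x' - xstar) \<le> norm b + \<alpha> * norm e"
    using norm_triangle_ineq[of b "\<alpha> *\<^sub>R e"] \<alpha>_nonneg by (simp add: x'_eq)
  also have "\<dots> \<le> norm (x - xstar) + \<alpha> * \<epsilon>"
    using b_le e_le \<alpha>_nonneg by (simp add: add_mono mult_left_mono)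
  finally show "norm (x' - xstar) \<le> norm (x - xstar) + \<alpha> * \<epsilon>" .
qed

lemma sum_telescoping_le:
  fixes s d t :: "nat \<Rightarrow> real"
  assumes "\<And>k. c * s k \<le> d k - d (Suc k) + t k"
  shows "c * (\<Sum>k<K. s k) \<le> d 0 - d K + (\<Sum>k<K. t k)"
proof -
  have "c * (\<Sum>k<K. s k) \<le> (\<Sum>k<K. d k - d (Suc k) + t k)"
    unfolding sum_distrib_left using assms by (rule sum_mono)
  also have "\<dots> = d 0 - d K + (\<Sum>k<K. t k)"
    by (simp add: sum.distrib sum_lessThan_telescope')
  finally show ?thesis .
qed

lemma inexact_relaxed_iteration_residual_sum_le:
  fixes x J Jt :: "nat \<Rightarrow> 'a::real_inner"
  assumes residual: "\<And>k. inner (x k - J k) (x k - xstar) \<ge> \<alpha> * (norm (x k - J k))\<^sup>2"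
    and \<alpha>_pos: "\<alpha> > 0"
    and inexact: "\<And>k. norm (J k - Jt k) \<le> \<epsilon> k"
    and iter: "\<And>k. x (Suc k) = (1 - \<alpha>) *\<^sub>R x k + \<alpha> *\<^sub>R Jt k"
  shows "(\<Sum>k<K. (norm (x k - J k))\<^sup>2)
           \<le> (norm (x 0 - xstar))\<^sup>2 / \<alpha>\<^sup>2 + 2 / \<alpha> * (\<Sum>k<K. norm (x k - xstar) * \<epsilon> k)
             + (\<Sum>k<K. (\<epsilon> k)\<^sup>2)"
proof -
  have "\<alpha>\<^sup>2 * (\<Sum>k<K. (norm (x k - J k))\<^sup>2)
          \<le> (norm (x 0 - xstar))\<^sup>2 - (norm (x K - xstar))\<^sup>2
            + (\<Sum>k<K. 2 * \<alpha> * (norm (x k - xstar) * \<epsilon> k) + \<alpha>\<^sup>2 * (\<epsilon> k)\<^sup>2)"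
    using inexact_relaxed_step(1)[OF residual less_imp_le[OF \<alpha>_pos] inexact iter]
    by (rule sum_telescoping_le)
  also have "\<dots> \<le> (norm (x 0 - xstar))\<^sup>2 + 2 * \<alpha> * (\<Sum>k<K. norm (x k - xstar) * \<epsilon> k)
                    + \<alpha>\<^sup>2 * (\<Sum>k<K. (\<epsilon> k)\<^sup>2)"
    by (simp add: sum.distrib sum_distrib_left)
  finally show ?thesis
    using \<alpha>_pos by (simp add: field_simps power2_eq_square)
qed

theorem lemma3p5:
  fixes F :: "'a::euclidean_space \<Rightarrow> 'a" and G :: "'a \<Rightarrow> 'a set"
    and L \<rho> \<eta> \<alpha> :: real and xstar :: 'a
    and x Jt J :: "nat \<Rightarrow> 'a" and \<epsilon> :: "nat \<Rightarrow> real"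
  assumes F_lip: "L-lipschitz_on UNIV F"
    and G_mm: "maximally_monotone G"
    and sol_nonempty: "{z. 0 \<in> op_sum F G z} \<noteq> {}"
    and xstar_sol: "0 \<in> op_sum F G xstar"
    and weak_mvi: "\<And>y u. u \<in> op_sum F G y \<Longrightarrow> inner u (y - xstar) \<ge> - \<rho> * (norm u)\<^sup>2"
    and rho_pos: "\<rho> > 0"
    and eta_gt: "\<eta> > \<rho>"
    and alpha_def: "\<alpha> = 1 - \<rho> / \<eta>"
    and J_res: "\<And>k. resolvent (op_scale \<eta> (op_sum F G)) (x k) = {J k}"
    and iter: "\<And>k. x (Suc k) = (1 - \<alpha>) *\<^sub>R x k + \<alpha> *\<^sub>R Jt k"
    and inexact: "\<And>k. norm (J k - Jt k) \<le> \<epsilon> k"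
    and eps_pos: "\<And>k. \<epsilon> k > 0"
  shows "(\<forall>K\<ge>1. (\<Sum>k<K. (norm (x k - J k))\<^sup>2)
                 - 2 * \<eta>\<^sup>2 / (\<eta> - \<rho>)\<^sup>2 * (norm (x 0 - xstar))\<^sup>2
               \<le> 6 * (\<Sum>k<K. (\<epsilon> k)\<^sup>2)
                 + 4 * \<eta> / (\<eta> - \<rho>) * (\<Sum>k<K. norm (x k - xstar) * \<epsilon> k))
      \<and> (\<forall>k\<ge>1. norm (x k - xstar) \<le> norm (x (k - 1) - xstar) + \<alpha> * \<epsilon> (k - 1))"
proof -
  define c where "c = \<eta> / (\<eta> - \<rho>)"
  have \<eta>_pos: "\<eta> > 0" and \<alpha>_pos: "\<alpha> > 0" and c_pos: "c > 0"
    using rho_pos eta_gt by (auto simp: alpha_def c_def field_simps)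
  have div_\<alpha>_sq: "n / \<alpha>\<^sup>2 = c\<^sup>2 * n" and div_\<alpha>: "2 / \<alpha> = 2 * c" for n :: real
    using \<eta>_pos eta_gt by (simp_all add: alpha_def c_def field_simps)
  have residual: "inner (x k - J k) (x k - xstar) \<ge> \<alpha> * (norm (x k - J k))\<^sup>2" for k
    using weak_minty_resolvent_residual[OF weak_mvi \<eta>_pos, where p = "J k" and x = "x k"] J_res
    by (simp add: alpha_def)
  have residual_sum: "(\<Sum>k<K. (norm (x k - J k))\<^sup>2)
      \<le> c\<^sup>2 * (norm (x 0 - xstar))\<^sup>2 + 2 * c * (\<Sum>k<K. norm (x k - xstar) * \<epsilon> k)
        + (\<Sum>k<K. (\<epsilon> k)\<^sup>2)" for K
    using inexact_relaxed_iteration_residual_sum_le[where x = x and J = J and Jt = Jt and \<epsilon> = \<epsilon>,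
            OF residual \<alpha>_pos inexact iter]
    by (simp only: div_\<alpha>_sq div_\<alpha>)
  have "(\<Sum>k<K. (norm (x k - J k))\<^sup>2) - 2 * c\<^sup>2 * (norm (x 0 - xstar))\<^sup>2
          \<le> 6 * (\<Sum>k<K. (\<epsilon> k)\<^sup>2) + 4 * c * (\<Sum>k<K. norm (x k - xstar) * \<epsilon> k)" for K
  proof -
    have "0 \<le> c * (\<Sum>k<K. norm (x k - xstar) * \<epsilon> k)"
      using c_pos eps_pos by (intro mult_nonneg_nonneg sum_nonneg) (simp_all add: less_imp_le)
    moreover have "0 \<le> c\<^sup>2 * (norm (x 0 - xstar))\<^sup>2" and "0 \<le> (\<Sum>k<K. (\<epsilon> k)\<^sup>2)"
      by (simp_all add: sum_nonneg)
    ultimately show ?thesis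
      using residual_sum[of K] by linarith
  qed
  moreover have "norm (x k - xstar) \<le> norm (x (k - 1) - xstar) + \<alpha> * \<epsilon> (k - 1)" if "k \<ge> 1" for k
    using that inexact_relaxed_step(2)[OF residual less_imp_le[OF \<alpha>_pos] inexact iter, of "k - 1"]
    by simp
  ultimately show ?thesis
    by (simp add: c_def power_divide)
qed

end
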